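(* The category $\mathbf{USppQu}$ of unitally supported quantales is a full and reflective subcategory of $\mathbf{SppUQu}$. For each object $(Q,\varsigma)$ of $\mathbf{SppUQu}$ the reflection $\eta:(Q,\varsigma)\to(Q,\varsigma_e)$ is obtained by defining the unital support $\varsigma_e(x)=\varsigma(x)\triangleright e$ for all $x\in Q$ and setting $\eta_1=\mathrm{id}_Q$ and $\eta_0(a)=a\triangleright e$ for all $a\in Q_0$.
   Context: For a locale $A$, an $A$-$A$-bimodule is a sup-lattice $M$ with actions $a\triangleright m$, $m\triangleleft a$ preserving joins in each variable, with $1_A\triangleright m=m$, $(a\wedge b)\triangleright m=a\triangleright(b\triangleright m)$, $m\triangleleft1_A=m$, $m\triangleleft(a\wedge b)=(m\triangleleft a)\triangleleft b$, $(a\triangleright m)\triangleleft b=a\triangleright(m\triangleleft b)$. An $A$-$A$-quantale is such a $Q$ with associative join-preserving multiplication and $(a\triangleright x)y=a\triangleright(xy)$, $(x\triangleleft a)y=x(a\triangleright y)$, $(xy)\triangleleft a=x(y\triangleleft a)$; involutive if there is a join-preserving $x\mapsto x^*$ with $x^{**}=x$, $(xy)^*=y^*x^*$, $(a\triangleright(x\triangleleft b))^*=b\triangleright(x^*\triangleleft a)$. A based quantale is an involutive $Q_0$-$Q_0$-quantale for a locale $Q_0$; a support is a join-preserving $\varsigma:Q\to Q_0$ with $\varsigma(1_Q)=1_{Q_0}$, $\varsigma(x)\triangleright y\le xx^*y$, $\varsigma(x)\triangleright x=x$. A morphism of supported quantales $f:Q\to R$ is a pair $(f_1,f_0)$, $f_1$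 a homomorphism of involutive quantales, $f_0:Q_0\to R_0$ a frame homomorphism, with $f_1(a\triangleright x)=f_0(a)\triangleright f_1(x)$, $f_1(x\triangleleft a)=f_1(x)\triangleleft f_0(a)$ and $f_0\circ\varsigma_Q=\varsigma_R\circ f_1$. $\mathbf{SppUQu}$: supported quantales whose quantale $Q$ has a multiplicative unit $e$, with morphisms such that $f_1$ preserves the unit. A unital support on a unital involutive quantale $Q$ is a join-preserving $\varsigma:Q\to Q$ with $\varsigma(x)\le e$, $\varsigma(x)\le xx^*$, $x\le\varsigma(x)x$; $\mathbf{USppQu}$ has these as objects and unital involutive quantale homomorphisms commuting with supports as morphisms. $\mathbf{USppQu}$ is identified with a subcategory of $\mathbf{SppUQu}$ by regarding $(Q,\varsigma)$ as a based quantale with $Q_0={\downarrow}e$ and actions $a\triangleright x=ax$, $x\triangleleft a=xa$, and a morphism $f$ as $(f,f|_{{\downarrow}e})$. *)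

theory Defs
  imports Main
begin

(* Sup-lattices are complete lattices (types of class complete_lattice).
   A supported quantale over a base locale: the quantale Q is the whole type 'q;
   the base locale Q_0 is a carrier set A :: 'a set inside a complete lattice 'a,
   closed under the ambient joins and binary meets, with the induced order.
   (Every locale L is represented by A = UNIV :: L set.) *)

record ('q, 'a) sqb =
  qmul  :: "'q \<Rightarrow> 'q \<Rightarrow> 'q"
  qinv  :: "'q \<Rightarrow> 'q"
  qunit :: "'q"
  base  :: "'a set"
  lact  :: "'a \<Rightarrow> 'q \<Rightarrow> 'q"
  ract  :: "'q \<Rightarrow> 'a \<Rightarrow> 'q"
  supp  :: "'q \<Rightarrow> 'a"

record 'q usq =
  umul  :: "'q \<Rightarrow> 'q \<Rightarrow> 'q"
  uinv  :: "'q \<Rightarrow> 'q"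
  uunit :: "'q"
  usupp :: "'q \<Rightarrow> 'q"

definition is_locale :: "'a::complete_lattice set \<Rightarrow> bool" where
  "is_locale A \<longleftrightarrow>
     (\<forall>S. S \<subseteq> A \<longrightarrow> Sup S \<in> A) \<and>
     (\<forall>a\<in>A. \<forall>b\<in>A. inf a b \<in> A) \<and>
     (\<forall>a\<in>A. \<forall>S. S \<subseteq> A \<longrightarrow> inf a (Sup S) = Sup ((\<lambda>b. inf a b) ` S))"

definition is_bimodule ::
  "'a::complete_lattice set \<Rightarrow> ('a \<Rightarrow> 'q::complete_lattice \<Rightarrow> 'q) \<Rightarrow> ('q \<Rightarrow> 'a \<Rightarrow> 'q) \<Rightarrow> bool" where
  "is_bimodule A la ra \<longleftrightarrow>
     (\<forall>S m. S \<subseteq> A \<longrightarrow> la (Sup S) m = Sup ((\<lambda>a. la a m) ` S)) \<and>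
     (\<forall>a\<in>A. \<forall>T. la a (Sup T) = Sup (la a ` T)) \<and>
     (\<forall>S m. S \<subseteq> A \<longrightarrow> ra m (Sup S) = Sup ((\<lambda>a. ra m a) ` S)) \<and>
     (\<forall>a\<in>A. \<forall>T. ra (Sup T) a = Sup ((\<lambda>m. ra m a) ` T)) \<and>
     (\<forall>m. la (Sup A) m = m) \<and>
     (\<forall>a\<in>A. \<forall>b\<in>A. \<forall>m. la (inf a b) m = la a (la b m)) \<and>
     (\<forall>m. ra m (Sup A) = m) \<and>
     (\<forall>a\<in>A. \<forall>b\<in>A. \<forall>m. ra m (inf a b) = ra (ra m a) b) \<and>
     (\<forall>a\<in>A. \<forall>b\<in>A. \<forall>m. ra (la a m) b = la a (ra m b))"

definition is_quantale :: "('q::complete_lattice \<Rightarrow> 'q \<Rightarrow> 'q) \<Rightarrow> bool" where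
  "is_quantale mul \<longleftrightarrow>
     (\<forall>x y z. mul (mul x y) z = mul x (mul y z)) \<and>
     (\<forall>S y. mul (Sup S) y = Sup ((\<lambda>x. mul x y) ` S)) \<and>
     (\<forall>x T. mul x (Sup T) = Sup (mul x ` T))"

definition is_involution :: "('q::complete_lattice \<Rightarrow> 'q \<Rightarrow> 'q) \<Rightarrow> ('q \<Rightarrow> 'q) \<Rightarrow> bool" where
  "is_involution mul iv \<longleftrightarrow>
     (\<forall>x. iv (iv x) = x) \<and>
     (\<forall>x y. iv (mul x y) = mul (iv y) (iv x)) \<and>
     (\<forall>S. iv (Sup S) = Sup (iv ` S))"

definition is_unit :: "('q \<Rightarrow> 'q \<Rightarrow> 'q) \<Rightarrow> 'q \<Rightarrow> bool" where
  "is_unit mul e \<longleftrightarrow> (\<forall>x. mul e x = x \<and> mul x e = x)"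

definition based_quantale :: "('q::complete_lattice, 'a::complete_lattice) sqb \<Rightarrow> bool" where
  "based_quantale S \<longleftrightarrow>
     is_locale (base S) \<and>
     is_bimodule (base S) (lact S) (ract S) \<and>
     is_quantale (qmul S) \<and>
     (\<forall>a\<in>base S. \<forall>x y. qmul S (lact S a x) y = lact S a (qmul S x y)) \<and>
     (\<forall>a\<in>base S. \<forall>x y. qmul S (ract S x a) y = qmul S x (lact S a y)) \<and>
     (\<forall>a\<in>base S. \<forall>x y. ract S (qmul S x y) a = qmul S x (ract S y a)) \<and>
     is_involution (qmul S) (qinv S) \<and>
     (\<forall>a\<in>base S. \<forall>b\<in>base S. \<forall>x.
        qinv S (lact S a (ract S x b)) = lact S b (ract S (qinv S x) a))"

definition is_support :: "('q::complete_lattice, 'a::complete_lattice) sqb \<Rightarrow> bool" where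
  "is_support S \<longleftrightarrow>
     (\<forall>X. supp S (Sup X) = Sup (supp S ` X)) \<and>
     (\<forall>x. supp S x \<in> base S) \<and>
     supp S top = Sup (base S) \<and>
     (\<forall>x y. lact S (supp S x) y \<le> qmul S (qmul S x (qinv S x)) y) \<and>
     (\<forall>x. lact S (supp S x) x = x)"

definition sppuqu_obj :: "('q::complete_lattice, 'a::complete_lattice) sqb \<Rightarrow> bool" where
  "sppuqu_obj S \<longleftrightarrow> based_quantale S \<and> is_support S \<and> is_unit (qmul S) (qunit S)"

definition sppuqu_mor ::
  "('q::complete_lattice, 'a::complete_lattice) sqb \<Rightarrow> ('r::complete_lattice, 'b::complete_lattice) sqb
   \<Rightarrow> ('q \<Rightarrow> 'r) \<Rightarrow> ('a \<Rightarrow> 'b) \<Rightarrow> bool" where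
  "sppuqu_mor S T f1 f0 \<longleftrightarrow>
     (\<forall>X. f1 (Sup X) = Sup (f1 ` X)) \<and>
     (\<forall>x y. f1 (qmul S x y) = qmul T (f1 x) (f1 y)) \<and>
     (\<forall>x. f1 (qinv S x) = qinv T (f1 x)) \<and>
     f1 (qunit S) = qunit T \<and>
     f0 ` base S \<subseteq> base T \<and>
     (\<forall>X. X \<subseteq> base S \<longrightarrow> f0 (Sup X) = Sup (f0 ` X)) \<and>
     (\<forall>a\<in>base S. \<forall>b\<in>base S. f0 (inf a b) = inf (f0 a) (f0 b)) \<and>
     f0 (Sup (base S)) = Sup (base T) \<and>
     (\<forall>a\<in>base S. \<forall>x. f1 (lact S a x) = lact T (f0 a) (f1 x)) \<and>
     (\<forall>a\<in>base S. \<forall>x. f1 (ract S x a) = ract T (f1 x) (f0 a)) \<and>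
     (\<forall>x. f0 (supp S x) = supp T (f1 x))"

definition usppqu_obj :: "'q::complete_lattice usq \<Rightarrow> bool" where
  "usppqu_obj U \<longleftrightarrow>
     is_quantale (umul U) \<and> is_involution (umul U) (uinv U) \<and> is_unit (umul U) (uunit U) \<and>
     (\<forall>X. usupp U (Sup X) = Sup (usupp U ` X)) \<and>
     (\<forall>x. usupp U x \<le> uunit U) \<and>
     (\<forall>x. usupp U x \<le> umul U x (uinv U x)) \<and>
     (\<forall>x. x \<le> umul U (usupp U x) x)"

definition usppqu_mor :: "'q::complete_lattice usq \<Rightarrow> 'r::complete_lattice usq \<Rightarrow> ('q \<Rightarrow> 'r) \<Rightarrow> bool" where
  "usppqu_mor U V f \<longleftrightarrow>
     (\<forall>X. f (Sup X) = Sup (f ` X)) \<and>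
     (\<forall>x y. f (umul U x y) = umul V (f x) (f y)) \<and>
     (\<forall>x. f (uinv U x) = uinv V (f x)) \<and>
     f (uunit U) = uunit V \<and>
     (\<forall>x. f (usupp U x) = usupp V (f x))"

(* the identification of USppQu objects as objects of SppUQu: Q_0 = \<down>e, actions = multiplication;
   a morphism f is identified with (f, f|\<down>e) *)
definition emb :: "'q::complete_lattice usq \<Rightarrow> ('q, 'q) sqb" where
  "emb U = \<lparr>qmul = umul U, qinv = uinv U, qunit = uunit U, base = {x. x \<le> uunit U},
            lact = umul U, ract = umul U, supp = usupp U\<rparr>"

definition reflect :: "('q::complete_lattice, 'a::complete_lattice) sqb \<Rightarrow> 'q usq" where
  "reflect S = \<lparr>umul = qmul S, uinv = qinv S, uunit = qunit S,
                usupp = (\<lambda>x. lact S (supp S x) (qunit S))\<rparr>"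

end

theory Submission
  imports Defs
begin

(* In a unital involutive quantale with unital support, every a \<le> e is fixed by the support,
   idempotent and self-adjoint, so multiplication restricted to \<down>e is the meet; hence \<down>e is a
   locale acting by multiplication, and the unital support is a support over it.
   Conversely, in an object of SppUQu each action a \<triangleright> - is multiplication by a \<triangleright> e \<le> e, so
   \<sigma>(x) \<triangleright> e is a unital support.  For a morphism (f1, f0) into an embedded object, f1 preserves
   e and so f0 a = f1 (a \<triangleright> e): the base component is determined by f1, and f1 alone is a
   morphism out of (Q, \<sigma>\<^sub>e).  This gives the universal property of \<eta> and, since
   reflect (emb U) = U, also fullness. *)

lemma Sup_preserving_mono:
  fixes f :: "'a::complete_lattice \<Rightarrow> 'b::complete_lattice"
  assumes "\<And>X. f (Sup X) = Sup (f ` X)"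
  shows "mono f"
proof
  fix x y :: 'a
  assume "x \<le> y"
  then have "f y = sup (f x) (f y)" using assms[of "{x, y}"] by (simp add: sup_absorb2)
  then show "f x \<le> f y" by (metis sup.cobounded1)
qed

locale usppqu =
  fixes U :: "'q::complete_lattice usq"
  assumes usppqu_obj: "usppqu_obj U"
begin

abbreviation mul (infixl "\<cdot>" 70) where "x \<cdot> y \<equiv> umul U x y"
abbreviation star where "star \<equiv> uinv U"
abbreviation e where "e \<equiv> uunit U"
abbreviation \<sigma> where "\<sigma> \<equiv> usupp U"

lemma is_quantale: "is_quantale (\<cdot>)"
  and is_involution: "is_involution (\<cdot>) star"
  and is_unit: "is_unit (\<cdot>) e"
  and supp_Sup: "\<sigma> (Sup X) = Sup (\<sigma> ` X)"
  and supp_le_unit: "\<sigma> x \<le> e"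
  and supp_le_mul_star: "\<sigma> x \<le> x \<cdot> star x"
  and le_supp_mul: "x \<le> \<sigma> x \<cdot> x"
  using usppqu_obj unfolding usppqu_obj_def by blast+

lemma mul_assoc: "x \<cdot> y \<cdot> z = x \<cdot> (y \<cdot> z)"
  and mul_Sup_left: "Sup X \<cdot> y = Sup ((\<lambda>x. x \<cdot> y) ` X)"
  and mul_Sup_right: "x \<cdot> Sup X = Sup ((\<cdot>) x ` X)"
  using is_quantale unfolding is_quantale_def by blast+

lemma star_star: "star (star x) = x"
  and star_mul: "star (x \<cdot> y) = star y \<cdot> star x"
  and star_Sup: "star (Sup X) = Sup (star ` X)"
  using is_involution unfolding is_involution_def by blast+

lemma unit_mul: "e \<cdot> x = x" and mul_unit: "x \<cdot> e = x"
  using is_unit unfolding is_unit_def by blast+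

lemma mul_mono_left: "x \<le> y \<Longrightarrow> x \<cdot> z \<le> y \<cdot> z"
  using Sup_preserving_mono[of "\<lambda>x. x \<cdot> z"] mul_Sup_left by (auto simp: image_image dest: monoD)

lemma mul_mono_right: "x \<le> y \<Longrightarrow> z \<cdot> x \<le> z \<cdot> y"
  using Sup_preserving_mono[of "(\<cdot>) z"] mul_Sup_right by (auto dest: monoD)

lemma star_mono: "x \<le> y \<Longrightarrow> star x \<le> star y"
  using Sup_preserving_mono[of star] star_Sup by (auto dest: monoD)

lemma star_unit: "star e = e"
  using star_mul[of e "star e"] by (simp add: star_star unit_mul mul_unit)

lemma star_le_unit: "a \<le> e \<Longrightarrow> star a \<le> e"
  using star_mono star_unit by metis

lemma mul_le_right_below_unit: "a \<le> e \<Longrightarrow> a \<cdot> x \<le> x"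
  using mul_mono_left[of a e x] by (simp add: unit_mul)

lemma mul_le_left_below_unit: "a \<le> e \<Longrightarrow> x \<cdot> a \<le> x"
  using mul_mono_right[of a e x] by (simp add: mul_unit)

lemma supp_below_unit:
  assumes "a \<le> e"
  shows "\<sigma> a = a"
proof (rule antisym)
  show "\<sigma> a \<le> a"
    using supp_le_mul_star[of a] mul_le_left_below_unit[OF star_le_unit[OF assms]] by (rule order_trans)
  show "a \<le> \<sigma> a"
    using le_supp_mul[of a] mul_le_left_below_unit[OF assms] by (rule order_trans)
qed

lemma mul_idem_below_unit: "a \<le> e \<Longrightarrow> a \<cdot> a = a"
  using le_supp_mul[of a] mul_le_right_below_unit[of a a] supp_below_unit[of a] by simp

lemma mul_eq_inf_below_unit:
  assumes "a \<le> e" "b \<le> e"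
  shows "a \<cdot> b = inf a b"
proof (rule antisym)
  show "a \<cdot> b \<le> inf a b"
    using mul_le_right_below_unit[OF assms(1)] mul_le_left_below_unit[OF assms(2)] by simp
  have "inf a b \<cdot> inf a b \<le> a \<cdot> b"
    by (meson inf.cobounded1 inf.cobounded2 mul_mono_left mul_mono_right order_trans)
  then show "inf a b \<le> a \<cdot> b"
    using assms by (simp add: mul_idem_below_unit le_infI1)
qed

lemma star_below_unit:
  assumes "a \<le> e"
  shows "star a = a"
proof -
  have le_star: "b \<le> star b" if "b \<le> e" for b
    using supp_le_mul_star[of b] supp_below_unit[OF that] mul_le_right_below_unit[OF that, of "star b"]
    by simp
  show ?thesis
    using le_star[OF assms] le_star[OF star_le_unit[OF assms]] star_star[of a] by simp
qed

lemma supp_mul_self: "\<sigma> x \<cdot> x = x"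
  by (simp add: antisym le_supp_mul mul_le_right_below_unit supp_le_unit)

lemma supp_top: "\<sigma> top = e"
proof (rule antisym)
  have "mono \<sigma>" using Sup_preserving_mono supp_Sup by blast
  then have "\<sigma> e \<le> \<sigma> top" by (simp add: monoD)
  then show "e \<le> \<sigma> top" by (simp add: supp_below_unit)
qed (rule supp_le_unit)

lemma Sup_below_unit: "Sup {x. x \<le> e} = e"
  by (simp add: Sup_atMost flip: atMost_def)

lemma is_locale_below_unit: "is_locale {x. x \<le> e}"
  unfolding is_locale_def
proof (intro conjI allI impI ballI)
  fix a and S :: "'q set"
  assume a: "a \<in> {x. x \<le> e}" and S: "S \<subseteq> {x. x \<le> e}"
  then have "inf a (Sup S) = a \<cdot> Sup S" by (simp add: mul_eq_inf_below_unit Sup_least subset_eq)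
  also have "\<dots> = Sup ((\<cdot>) a ` S)" by (rule mul_Sup_right)
  also have "(\<cdot>) a ` S = inf a ` S"
    using a S by (auto simp: mul_eq_inf_below_unit intro!: image_cong)
  finally show "inf a (Sup S) = Sup (inf a ` S)" .
qed (auto intro: Sup_least le_infI1)

lemma sppuqu_obj_emb: "sppuqu_obj (emb U)"
proof -
  have "is_bimodule {x. x \<le> e} (\<cdot>) (\<cdot>)"
    unfolding is_bimodule_def
    by (auto simp: mul_Sup_left mul_Sup_right unit_mul mul_unit Sup_below_unit mul_assoc
        simp flip: mul_eq_inf_below_unit)
  then have "based_quantale (emb U)"
    unfolding based_quantale_def emb_def
    by (auto simp: is_locale_below_unit is_quantale is_involution mul_assoc star_mul star_below_unit)
  moreover have "is_support (emb U)"
    unfolding is_support_def emb_def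
    by (auto simp: supp_Sup supp_le_unit supp_top Sup_below_unit
        intro: mul_mono_left supp_le_mul_star supp_mul_self)
  ultimately show ?thesis
    unfolding sppuqu_obj_def by (simp add: emb_def is_unit)
qed

lemma reflect_emb: "reflect (emb U) = U"
  by (simp add: reflect_def emb_def mul_unit supp_le_unit supp_below_unit)

end

locale sppuqu =
  fixes S :: "('q::complete_lattice, 'a::complete_lattice) sqb"
  assumes sppuqu_obj: "sppuqu_obj S"
begin

abbreviation mul (infixl "\<cdot>" 70) where "x \<cdot> y \<equiv> qmul S x y"
abbreviation star where "star \<equiv> qinv S"
abbreviation e where "e \<equiv> qunit S"
abbreviation \<sigma> where "\<sigma> \<equiv> supp S"
abbreviation left_action (infixr "\<triangleright>" 75) where "a \<triangleright> x \<equiv> lact S a x"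
abbreviation right_action (infixl "\<triangleleft>" 75) where "x \<triangleleft> a \<equiv> ract S x a"
abbreviation Q\<^sub>0 where "Q\<^sub>0 \<equiv> base S"

lemma based_quantale: "based_quantale S"
  and is_support: "is_support S"
  and is_unit: "is_unit (\<cdot>) e"
  using sppuqu_obj unfolding sppuqu_obj_def by blast+

lemma is_locale: "is_locale Q\<^sub>0"
  and is_bimodule: "is_bimodule Q\<^sub>0 (\<triangleright>) (\<triangleleft>)"
  and is_quantale: "is_quantale (\<cdot>)"
  and is_involution: "is_involution (\<cdot>) star"
  and mul_lact: "a \<in> Q\<^sub>0 \<Longrightarrow> (a \<triangleright> x) \<cdot> y = a \<triangleright> (x \<cdot> y)"
  and mul_ract: "a \<in> Q\<^sub>0 \<Longrightarrow> (x \<triangleleft> a) \<cdot> y = x \<cdot> (a \<triangleright> y)"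
  using based_quantale unfolding based_quantale_def by blast+

lemma lact_Sup: "X \<subseteq> Q\<^sub>0 \<Longrightarrow> Sup X \<triangleright> x = Sup ((\<lambda>a. a \<triangleright> x) ` X)"
  and lact_top: "Sup Q\<^sub>0 \<triangleright> x = x"
  and lact_inf: "a \<in> Q\<^sub>0 \<Longrightarrow> b \<in> Q\<^sub>0 \<Longrightarrow> inf a b \<triangleright> x = a \<triangleright> b \<triangleright> x"
  using is_bimodule unfolding is_bimodule_def by blast+

lemma supp_Sup: "\<sigma> (Sup X) = Sup (\<sigma> ` X)"
  and supp_in_base: "\<sigma> x \<in> Q\<^sub>0"
  and lact_supp_le: "\<sigma> x \<triangleright> y \<le> x \<cdot> star x \<cdot> y"
  and lact_supp_self: "\<sigma> x \<triangleright> x = x"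
  using is_support unfolding is_support_def by blast+

lemma unit_mul: "e \<cdot> x = x" and mul_unit: "x \<cdot> e = x"
  using is_unit unfolding is_unit_def by blast+

lemma lact_mono:
  assumes "a \<in> Q\<^sub>0" "b \<in> Q\<^sub>0" "a \<le> b"
  shows "a \<triangleright> x \<le> b \<triangleright> x"
proof -
  have "b \<triangleright> x = sup (a \<triangleright> x) (b \<triangleright> x)"
    using lact_Sup[of "{a, b}" x] assms by (simp add: sup_absorb2)
  then show ?thesis by (metis sup.cobounded1)
qed

lemma lact_unit_le_unit: "a \<in> Q\<^sub>0 \<Longrightarrow> a \<triangleright> e \<le> e"
  using lact_mono[of a "Sup Q\<^sub>0" e] is_locale by (simp add: lact_top is_locale_def Sup_upper)

lemma lact_eq_mul: "a \<in> Q\<^sub>0 \<Longrightarrow> a \<triangleright> x = (a \<triangleright> e) \<cdot> x"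
  using mul_lact[of a e x] by (simp add: unit_mul)

lemma ract_eq_mul: "a \<in> Q\<^sub>0 \<Longrightarrow> x \<triangleleft> a = x \<cdot> (a \<triangleright> e)"
  using mul_ract[of a x e] by (simp add: mul_unit)

lemma usppqu_obj_reflect: "usppqu_obj (reflect S)"
proof -
  have "\<sigma> (Sup X) \<triangleright> e = Sup ((\<lambda>x. \<sigma> x \<triangleright> e) ` X)" for X
    using lact_Sup[of "\<sigma> ` X" e] supp_in_base by (simp add: supp_Sup image_image image_subset_iff)
  moreover have "\<sigma> x \<triangleright> e \<le> x \<cdot> star x" for x
    using lact_supp_le[of x e] by (simp add: mul_unit)
  moreover have "x \<le> (\<sigma> x \<triangleright> e) \<cdot> x" for x
    by (simp add: lact_eq_mul[symmetric] supp_in_base lact_supp_self)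
  ultimately show ?thesis
    unfolding usppqu_obj_def reflect_def
    using is_quantale is_involution is_unit lact_unit_le_unit supp_in_base by simp
qed

end

sublocale sppuqu \<subseteq> reflection: usppqu "reflect S"
  by (rule usppqu.intro) (rule usppqu_obj_reflect)

lemma sppuqu_mor_emb_base_eq:
  assumes "sppuqu_mor S (emb V) f\<^sub>1 f\<^sub>0" "is_unit (umul V) (uunit V)" "a \<in> base S"
  shows "f\<^sub>0 a = f\<^sub>1 (lact S a (qunit S))"
  using assms unfolding sppuqu_mor_def emb_def is_unit_def by simp

context sppuqu
begin

lemma lact_unit_inf:
  assumes "a \<in> Q\<^sub>0" "b \<in> Q\<^sub>0"
  shows "inf a b \<triangleright> e = inf (a \<triangleright> e) (b \<triangleright> e)"
proof -
  have "inf a b \<triangleright> e = (a \<triangleright> e) \<cdot> (b \<triangleright> e)"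
    using assms lact_eq_mul[of a "b \<triangleright> e"] by (simp add: lact_inf)
  also have "\<dots> = inf (a \<triangleright> e) (b \<triangleright> e)"
    using reflection.mul_eq_inf_below_unit assms lact_unit_le_unit by (simp add: reflect_def)
  finally show ?thesis .
qed

lemma sppuqu_mor_unit: "sppuqu_mor S (emb (reflect S)) id (\<lambda>a. a \<triangleright> e)"
  unfolding sppuqu_mor_def
  using lact_Sup lact_unit_inf lact_unit_le_unit lact_top reflection.Sup_below_unit
  by (auto simp: emb_def reflect_def lact_eq_mul[symmetric] ract_eq_mul)

lemma usppqu_mor_reflect:
  assumes "usppqu_obj V" "sppuqu_mor S (emb V) f\<^sub>1 f\<^sub>0"
  shows "usppqu_mor (reflect S) V f\<^sub>1"
proof -
  have "f\<^sub>1 (\<sigma> x \<triangleright> e) = f\<^sub>0 (\<sigma> x)" for x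
    using sppuqu_mor_emb_base_eq[OF assms(2)] assms(1) supp_in_base
    by (simp add: usppqu_obj_def)
  then show ?thesis
    using assms(2) unfolding sppuqu_mor_def usppqu_mor_def reflect_def emb_def by simp
qed

lemma reflection_universal:
  assumes "usppqu_obj V" "sppuqu_mor S (emb V) f\<^sub>1 f\<^sub>0"
  shows "\<exists>!g. usppqu_mor (reflect S) V g \<and> g \<circ> id = f\<^sub>1 \<and> (\<forall>a\<in>Q\<^sub>0. (g \<circ> (\<lambda>a. a \<triangleright> e)) a = f\<^sub>0 a)"
proof (rule ex1I[of _ f\<^sub>1])
  show "usppqu_mor (reflect S) V f\<^sub>1 \<and> f\<^sub>1 \<circ> id = f\<^sub>1 \<and> (\<forall>a\<in>Q\<^sub>0. (f\<^sub>1 \<circ> (\<lambda>a. a \<triangleright> e)) a = f\<^sub>0 a)"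
    using usppqu_mor_reflect[OF assms] sppuqu_mor_emb_base_eq[OF assms(2)] assms(1)
    by (simp add: usppqu_obj_def)
qed simp

end

lemma (in usppqu) sppuqu_mor_emb:
  assumes "usppqu_obj V" "usppqu_mor U V f"
  shows "sppuqu_mor (emb U) (emb V) f f"
proof -
  interpret V: usppqu V by (rule usppqu.intro) (rule assms(1))
  have "f e = uunit V" and "mono f"
    using assms(2) Sup_preserving_mono[of f] unfolding usppqu_mor_def by auto
  then have "a \<le> e \<Longrightarrow> f a \<le> uunit V" for a by (metis monoD)
  then show ?thesis
    using assms(2) Sup_below_unit V.Sup_below_unit
    unfolding sppuqu_mor_def usppqu_mor_def emb_def
    by (auto simp flip: mul_eq_inf_below_unit V.mul_eq_inf_below_unit)
qed

lemma (in usppqu) usppqu_mor_of_sppuqu_mor_emb: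
  assumes "usppqu_obj V" "sppuqu_mor (emb U) (emb V) f\<^sub>1 f\<^sub>0"
  shows "usppqu_mor U V f\<^sub>1"
proof -
  interpret E: sppuqu "emb U" by (rule sppuqu.intro) (rule sppuqu_obj_emb)
  show ?thesis
    using E.usppqu_mor_reflect[OF assms] by (simp add: reflect_emb)
qed

lemma (in usppqu) sppuqu_mor_emb_base_eq_below_unit:
  assumes "usppqu_obj V" "sppuqu_mor (emb U) (emb V) f\<^sub>1 f\<^sub>0" "a \<le> e"
  shows "f\<^sub>0 a = f\<^sub>1 a"
  using sppuqu_mor_emb_base_eq[OF assms(2), of a] assms(1,3)
  by (simp add: usppqu_obj_def emb_def mul_unit)

theorem lemma3p13:
  shows
  "(\<forall>U :: 'u::complete_lattice usq. usppqu_obj U \<longrightarrow> sppuqu_obj (emb U))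
   \<and> (\<forall>(U :: 'u::complete_lattice usq) (V :: 'v::complete_lattice usq) f.
        usppqu_obj U \<and> usppqu_obj V \<and> usppqu_mor U V f \<longrightarrow> sppuqu_mor (emb U) (emb V) f f)
   \<and> (\<forall>(U :: 'u::complete_lattice usq) (V :: 'v::complete_lattice usq) f1 f0.
        usppqu_obj U \<and> usppqu_obj V \<and> sppuqu_mor (emb U) (emb V) f1 f0 \<longrightarrow>
          usppqu_mor U V f1 \<and> (\<forall>a. a \<le> uunit U \<longrightarrow> f0 a = f1 a))
   \<and> (\<forall>S :: ('q::complete_lattice, 'a::complete_lattice) sqb. sppuqu_obj S \<longrightarrow>
        usppqu_obj (reflect S) \<and>
        sppuqu_mor S (emb (reflect S)) id (\<lambda>a. lact S a (qunit S)) \<and>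
        (\<forall>(V :: 'v::complete_lattice usq) f1 f0.
           usppqu_obj V \<and> sppuqu_mor S (emb V) f1 f0 \<longrightarrow>
             (\<exists>!g. usppqu_mor (reflect S) V g \<and> g \<circ> id = f1 \<and>
                   (\<forall>a\<in>base S. (g \<circ> (\<lambda>a. lact S a (qunit S))) a = f0 a))))"
  by (intro conjI allI impI; (elim conjE)?)
    (rule usppqu.sppuqu_obj_emb[OF usppqu.intro] usppqu.sppuqu_mor_emb[OF usppqu.intro]
      usppqu.usppqu_mor_of_sppuqu_mor_emb[OF usppqu.intro]
      usppqu.sppuqu_mor_emb_base_eq_below_unit[OF usppqu.intro]
      sppuqu.usppqu_obj_reflect[OF sppuqu.intro] sppuqu.sppuqu_mor_unit[OF sppuqu.intro]
      sppuqu.reflection_universal[OF sppuqu.intro]; assumption)+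

end
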